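(* Let an ordered storyline instance be given and let $\Delta,\overline{\Delta}\in\mathbb{N}$. Consider the polyhedron $P$ in the variables $y_{t,c}$ ($t\in[\ell]$, $c\in\mathrm{Ac}(t)$) and $w_{t,c}$ ($t\in[\ell-1]$, $c\in\mathrm{Ac}(t)\cap\mathrm{Ac}(t+1)$) defined by the constraints: $y_{t,c'}-y_{t,c}=\Delta$ for all $t\in[\ell]$ and $(c,c')\in N_{\mathcal{M}}(t)$; $y_{t,c'}-y_{t,c}\ge\overline{\Delta}$ for all $t\in[\ell]$ and $(c,c')\in N_A(t)$; $y_{t,c}-y_{t+1,c}\le w_{t,c}$ and $y_{t+1,c}-y_{t,c}\le w_{t,c}$ for all $t\in[\ell-1]$, $c\in\mathrm{Ac}(t)\cap\mathrm{Ac}(t+1)$; and $y_{t,c}\ge 0$ for all $t\in[\ell]$, $c\in\mathrm{Ac}(t)$. Then every extreme point of $P$ is integral.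
   Context: Write $[n]=\{1,\dots,n\}$. An ordered storyline instance consists of characters $\mathcal{C}$, time steps $[\ell]$, meetings $\mathcal{M}$ (each meeting $M$ has a time step $\mathrm{tm}(M)$ and character set $\mathrm{char}(M)$), for each character $c$ a set $A(c)$ of consecutive active time steps, and for each $t$ a permutation $\pi_t$ of the active characters $\mathrm{Ac}(t)=\{c: t\in A(c)\}$ in which the characters of each meeting at time $t$ are consecutive; $c\prec_t c'$ means $c$ precedes $c'$ in $\pi_t$. For $t\in[\ell]$: $N(t)$ is the set of pairs $(c,c')$ of characters consecutive in $\pi_t$ with $c\prec_t c'$; $N_{\mathcal{M}}(t)$ is the set of pairs in $N(t)$ whose two characters belong to a common meeting at time step $t$; $N_A(t)=N(t)\setminus N_{\mathcal{M}}(t)$. *)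

theory Defs
  imports "HOL-Analysis.Analysis"
begin

text \<open>Ordered storyline instance: characters \<open>Cs\<close>, time steps \<open>{1..l}\<close>,
 meetings \<open>Ms\<close> with time \<open>tm\<close> and character set \<open>chr\<close>, active sets \<open>A\<close>,
 and for every time step a list \<open>\<pi>s t\<close> representing the permutation of the
 active characters.\<close>

definition Ac :: "'c set \<Rightarrow> ('c \<Rightarrow> nat set) \<Rightarrow> nat \<Rightarrow> 'c set" where
  "Ac Cs A t = {c \<in> Cs. t \<in> A c}"

definition ordered_storyline ::
  "'c set \<Rightarrow> nat \<Rightarrow> 'm set \<Rightarrow> ('m \<Rightarrow> nat) \<Rightarrow> ('m \<Rightarrow> 'c set) \<Rightarrow> ('c \<Rightarrow> nat set)
   \<Rightarrow> (nat \<Rightarrow> 'c list) \<Rightarrow> bool" where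
  "ordered_storyline Cs l Ms tm chr A \<pi>s \<longleftrightarrow>
     finite Cs \<and> finite Ms \<and>
     (\<forall>M\<in>Ms. tm M \<in> {1..l} \<and> chr M \<subseteq> Cs) \<and>
     (\<forall>c\<in>Cs. (\<exists>a b. A c = {a..b}) \<and> A c \<subseteq> {1..l}) \<and>
     (\<forall>M\<in>Ms. \<forall>c\<in>chr M. tm M \<in> A c) \<and>
     (\<forall>t\<in>{1..l}. distinct (\<pi>s t) \<and> set (\<pi>s t) = Ac Cs A t) \<and>
     (\<forall>M\<in>Ms. \<exists>i j. chr M = set (take (j - i) (drop i (\<pi>s (tm M)))))"

definition Nb :: "(nat \<Rightarrow> 'c list) \<Rightarrow> nat \<Rightarrow> ('c \<times> 'c) set" where
  "Nb \<pi>s t = {(\<pi>s t ! i, \<pi>s t ! Suc i) | i. Suc i < length (\<pi>s t)}"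

definition NM :: "(nat \<Rightarrow> 'c list) \<Rightarrow> 'm set \<Rightarrow> ('m \<Rightarrow> nat) \<Rightarrow> ('m \<Rightarrow> 'c set)
   \<Rightarrow> nat \<Rightarrow> ('c \<times> 'c) set" where
  "NM \<pi>s Ms tm chr t = {(c, c') \<in> Nb \<pi>s t. \<exists>M\<in>Ms. tm M = t \<and> c \<in> chr M \<and> c' \<in> chr M}"

definition NA :: "(nat \<Rightarrow> 'c list) \<Rightarrow> 'm set \<Rightarrow> ('m \<Rightarrow> nat) \<Rightarrow> ('m \<Rightarrow> 'c set)
   \<Rightarrow> nat \<Rightarrow> ('c \<times> 'c) set" where
  "NA \<pi>s Ms tm chr t = Nb \<pi>s t - NM \<pi>s Ms tm chr t"

datatype 'c var = Y nat 'c | W nat 'c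

definition vars :: "'c set \<Rightarrow> ('c \<Rightarrow> nat set) \<Rightarrow> nat \<Rightarrow> 'c var set" where
  "vars Cs A l = {Y t c | t c. t \<in> {1..l} \<and> c \<in> Ac Cs A t}
     \<union> {W t c | t c. t \<in> {1..l-1} \<and> c \<in> Ac Cs A t \<inter> Ac Cs A (Suc t)}"

text \<open>The polyhedron \<open>P \<subseteq> \<real>^{vars}\<close>; a point is a real function on variables
 vanishing outside the variable set (canonical embedding of \<open>\<real>^{vars}\<close>).\<close>
definition polyP ::
  "'c set \<Rightarrow> nat \<Rightarrow> 'm set \<Rightarrow> ('m \<Rightarrow> nat) \<Rightarrow> ('m \<Rightarrow> 'c set) \<Rightarrow> ('c \<Rightarrow> nat set)
   \<Rightarrow> (nat \<Rightarrow> 'c list) \<Rightarrow> nat \<Rightarrow> nat \<Rightarrow> ('c var \<Rightarrow> real) set" where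
  "polyP Cs l Ms tm chr A \<pi>s \<Delta> \<Delta>b = {x.
     (\<forall>v. v \<notin> vars Cs A l \<longrightarrow> x v = 0) \<and>
     (\<forall>t\<in>{1..l}. \<forall>(c, c')\<in>NM \<pi>s Ms tm chr t. x (Y t c') - x (Y t c) = real \<Delta>) \<and>
     (\<forall>t\<in>{1..l}. \<forall>(c, c')\<in>NA \<pi>s Ms tm chr t. x (Y t c') - x (Y t c) \<ge> real \<Delta>b) \<and>
     (\<forall>t\<in>{1..l-1}. \<forall>c\<in>Ac Cs A t \<inter> Ac Cs A (Suc t).
        x (Y t c) - x (Y (Suc t) c) \<le> x (W t c) \<and> x (Y (Suc t) c) - x (Y t c) \<le> x (W t c)) \<and>
     (\<forall>t\<in>{1..l}. \<forall>c\<in>Ac Cs A t. x (Y t c) \<ge> 0)}"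

definition extreme_pt :: "('v \<Rightarrow> real) \<Rightarrow> ('v \<Rightarrow> real) set \<Rightarrow> bool" where
  "extreme_pt x S \<longleftrightarrow> x \<in> S \<and>
     (\<forall>a\<in>S. \<forall>b\<in>S. \<forall>u::real. 0 < u \<and> u < 1 \<and> x = (\<lambda>v. u * a v + (1 - u) * b v) \<longrightarrow> a = b)"

end

theory Submission
  imports Defs
begin

text \<open>At an extreme point every w(t,c) equals |y(t,c) - y(t+1,c)|, so the point is
 determined by its y-part. Suppose some coordinate y0 is not an integer. Move all
 coordinates congruent to y0 modulo 1 by +e, respectively -e, for a small e > 0, and
 recompute the w's. Every constraint compares a difference of two y's, or a single y,
 with an integer: coordinates in the same class keep their difference, and a difference
 across classes, or a moved value, lies at distance at least e from every integer. So both
 moved points stay in P, and the original point is their midpoint.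
 Only the finiteness of the character set enters.\<close>

lemma infdist_Ints_le_abs_diff:
  fixes d n :: real
  assumes "n \<in> \<int>"
  shows "infdist d \<int> \<le> \<bar>d - n\<bar>"
  using infdist_le[OF assms, of d] by (simp add: dist_real_def)

lemma finite_uniform_infdist_Ints:
  fixes D :: "real set"
  assumes "finite D" and "D \<inter> \<int> = {}"
  obtains \<epsilon> where "0 < \<epsilon>" and "\<And>d. d \<in> D \<Longrightarrow> \<epsilon> \<le> infdist d \<int>"
proof
  let ?\<epsilon> = "Min (insert 1 ((\<lambda>d. infdist d \<int>) ` D))"
  have "0 < infdist d \<int>" if "d \<in> D" for d
    using that assms(2) by (intro infdist_pos_not_in_closed) auto
  then show "0 < ?\<epsilon>"
    using assms(1) by simp
  show "?\<epsilon> \<le> infdist d \<int>" if "d \<in> D" for d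
    using assms(1) that by simp
qed

lemma finite_diffs_far_from_Ints:
  fixes R :: "real set"
  assumes "finite R"
  obtains \<epsilon> where "0 < \<epsilon>"
    and "\<And>a b n. a \<in> R \<Longrightarrow> b \<in> R \<Longrightarrow> a - b \<notin> \<int> \<Longrightarrow> n \<in> \<int> \<Longrightarrow> \<epsilon> \<le> \<bar>a - b - n\<bar>"
proof -
  define D where "D = {a - b | a b. a \<in> R \<and> b \<in> R} - \<int>"
  have "{a - b | a b. a \<in> R \<and> b \<in> R} = (\<lambda>(a, b). a - b) ` (R \<times> R)"
    by auto
  then have "finite D"
    using assms by (simp add: D_def)
  then obtain \<epsilon> where \<epsilon>: "0 < \<epsilon>" and gap: "\<And>r. r \<in> D \<Longrightarrow> \<epsilon> \<le> infdist r \<int>"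
    using finite_uniform_infdist_Ints[of D] by (auto simp: D_def)
  show thesis
  proof (rule that[OF \<epsilon>])
    fix a b n :: real
    assume "a \<in> R" "b \<in> R" "a - b \<notin> \<int>" and n: "n \<in> \<int>"
    then have "a - b \<in> D"
      unfolding D_def by blast
    then show "\<epsilon> \<le> \<bar>a - b - n\<bar>"
      using gap infdist_Ints_le_abs_diff[OF n, of "a - b"] by fastforce
  qed
qed

lemma abs_eq_midpoint_abs:
  fixes d e :: real
  assumes "\<bar>e\<bar> \<le> \<bar>d\<bar>"
  shows "\<bar>d\<bar> = (\<bar>d + e\<bar> + \<bar>d - e\<bar>) / 2"
  using assms by (auto simp: abs_if)

lemma extreme_pt_symmetric_move:
  assumes "extreme_pt x S" and "(\<lambda>v. x v + d v) \<in> S" and "(\<lambda>v. x v - d v) \<in> S"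
  shows "d = (\<lambda>_. 0)"
proof -
  have "x = (\<lambda>v. 1/2 * (x v + d v) + (1 - 1/2) * (x v - d v))"
    by (simp add: field_simps)
  moreover have "0 < (1/2::real)" "(1/2::real) < 1"
    by simp_all
  ultimately have eq: "(\<lambda>v. x v + d v) = (\<lambda>v. x v - d v)"
    using assms(1) unfolding extreme_pt_def by (metis assms(2,3))
  show ?thesis
  proof
    fix v
    show "d v = 0"
      using fun_cong[OF eq, of v] by simp
  qed
qed

lemma non_Ints_perturbation:
  fixes x :: "'v \<Rightarrow> real"
  assumes "finite (range x)" and "x v\<^sub>0 \<notin> \<int>"
  obtains d where "d v\<^sub>0 \<noteq> 0"
    and "\<And>p q. \<bar>d p - d q\<bar> \<le> \<bar>x p - x q\<bar>"
    and "\<And>v. x v \<in> \<int> \<Longrightarrow> d v = 0"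
    and "\<And>p q. x p - x q \<in> \<int> \<Longrightarrow> d p = d q"
    and "\<And>p q n s. n \<in> \<int> \<Longrightarrow> n \<le> x p - x q \<Longrightarrow> \<bar>s\<bar> \<le> 1 \<Longrightarrow>
      n \<le> (x p + s * d p) - (x q + s * d q)"
    and "\<And>p n s. n \<in> \<int> \<Longrightarrow> n \<le> x p \<Longrightarrow> \<bar>s\<bar> \<le> 1 \<Longrightarrow> n \<le> x p + s * d p"
proof -
  define R where "R = insert 0 (range x)"
  obtain \<epsilon> where \<epsilon>: "0 < \<epsilon>"
    and far: "\<And>a b n. a \<in> R \<Longrightarrow> b \<in> R \<Longrightarrow> a - b \<notin> \<int> \<Longrightarrow> n \<in> \<int> \<Longrightarrow> \<epsilon> \<le> \<bar>a - b - n\<bar>"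
    using finite_diffs_far_from_Ints[of R] assms(1) by (auto simp: R_def)
  define K where "K = {v. x v - x v\<^sub>0 \<in> \<int>}"
  define d where "d v = (if v \<in> K then \<epsilon> else 0)" for v
  have same_K: "p \<in> K \<longleftrightarrow> q \<in> K" if "x p - x q \<in> \<int>" for p q
  proof -
    have "x p - x v\<^sub>0 = (x p - x q) + (x q - x v\<^sub>0)"
      by simp
    then show ?thesis
      using that add_in_Ints_iff_left unfolding K_def by (metis mem_Collect_eq)
  qed
  have in_K: "x p \<notin> \<int>" if "p \<in> K" for p
    using assms(2) that diff_in_Ints_iff_left unfolding K_def by blast
  have R: "x p \<in> R" "0 \<in> R" for p
    by (simp_all add: R_def)
  have d_diff_le: "\<bar>d p - d q\<bar> \<le> \<epsilon>" and d_le: "\<bar>d p\<bar> \<le> \<epsilon>" for p q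
    using \<epsilon> by (simp_all add: d_def)
  have scaled_le: "\<bar>s * r\<bar> \<le> \<epsilon>" if "\<bar>s\<bar> \<le> 1" "\<bar>r\<bar> \<le> \<epsilon>" for s r :: real
    using mult_mono[OF that] \<epsilon> by (simp add: abs_mult)
  show thesis
  proof
    show "d v\<^sub>0 \<noteq> 0"
      using \<epsilon> by (simp add: d_def K_def)
    show "d v = 0" if "x v \<in> \<int>" for v
      using in_K that by (auto simp: d_def)
    show d_eq: "d p = d q" if "x p - x q \<in> \<int>" for p q
      using same_K[OF that] by (simp add: d_def)
    show "\<bar>d p - d q\<bar> \<le> \<bar>x p - x q\<bar>" for p q
    proof (cases "x p - x q \<in> \<int>")
      case False
      then show ?thesis
        using far[OF R(1,1) False Ints_0] d_diff_le[of p q] by simp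
    qed (simp add: d_eq)
    show "n \<le> (x p + s * d p) - (x q + s * d q)"
      if "n \<in> \<int>" "n \<le> x p - x q" "\<bar>s\<bar> \<le> 1" for p q n s
    proof (cases "x p - x q \<in> \<int>")
      case False
      then show ?thesis
        using far[OF R(1,1) False that(1)] that(2) scaled_le[OF that(3) d_diff_le[of p q]]
        by (simp add: algebra_simps)
    qed (use that d_eq in simp)
    show "n \<le> x p + s * d p" if "n \<in> \<int>" "n \<le> x p" "\<bar>s\<bar> \<le> 1" for p n s
    proof (cases "p \<in> K")
      case True
      then have "\<epsilon> \<le> \<bar>x p - n\<bar>"
        using far[OF R(1,2) _ that(1), of p] in_K by simp
      then show ?thesis
        using that(2) scaled_le[OF that(3) d_le[of p]] by linarith
    qed (use that in \<open>simp add: d_def\<close>)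
  qed
qed

definition tighten :: "'c set \<Rightarrow> ('c \<Rightarrow> nat set) \<Rightarrow> nat \<Rightarrow> ('c var \<Rightarrow> real) \<Rightarrow> 'c var \<Rightarrow> real" where
  "tighten Cs A l y v =
     (if v \<in> vars Cs A l
      then (case v of Y t c \<Rightarrow> y (Y t c) | W t c \<Rightarrow> \<bar>y (Y t c) - y (Y (Suc t) c)\<bar>)
      else 0)"

lemma W_in_vars_iff:
  "W t c \<in> vars Cs A l \<longleftrightarrow> t \<in> {1..l-1} \<and> c \<in> Ac Cs A t \<inter> Ac Cs A (Suc t)"
  by (auto simp: vars_def)

lemma finite_vars:
  assumes "finite Cs"
  shows "finite (vars Cs A l)"
proof -
  have "vars Cs A l \<subseteq> (\<lambda>(t, c). Y t c) ` ({1..l} \<times> Cs) \<union> (\<lambda>(t, c). W t c) ` ({1..l} \<times> Cs)"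
    by (auto simp: vars_def Ac_def)
  then show ?thesis
    using assms by (meson finite_subset finite_UnI finite_imageI finite_SigmaI finite_atLeastAtMost)
qed

lemma polyP_outside_vars:
  "x \<in> polyP Cs l Ms tm chr A \<pi>s \<Delta> \<Delta>b \<Longrightarrow> v \<notin> vars Cs A l \<Longrightarrow> x v = 0"
  by (simp add: polyP_def)

lemma tighten_Y:
  assumes "\<And>v. v \<notin> vars Cs A l \<Longrightarrow> y v = 0"
  shows "tighten Cs A l y (Y t c) = y (Y t c)"
  using assms[of "Y t c"] by (simp add: tighten_def)

lemma tighten_in_polyP:
  assumes xP: "x \<in> polyP Cs l Ms tm chr A \<pi>s \<Delta> \<Delta>b"
    and outside: "\<And>v. v \<notin> vars Cs A l \<Longrightarrow> z v = 0"
    and eq: "\<And>p q. x p - x q \<in> \<int> \<Longrightarrow> z p - z q = x p - x q"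
    and lower: "\<And>p q n. n \<in> \<int> \<Longrightarrow> n \<le> x p - x q \<Longrightarrow> n \<le> z p - z q"
    and nonneg: "\<And>p. 0 \<le> x p \<Longrightarrow> 0 \<le> z p"
  shows "tighten Cs A l z \<in> polyP Cs l Ms tm chr A \<pi>s \<Delta> \<Delta>b"
proof -
  have zY: "tighten Cs A l z (Y t c) = z (Y t c)" for t c
    by (rule tighten_Y[OF outside])
  have "z (Y t c') - z (Y t c) = real \<Delta>" if "t \<in> {1..l}" "(c, c') \<in> NM \<pi>s Ms tm chr t" for t c c'
  proof -
    have "x (Y t c') - x (Y t c) = real \<Delta>"
      using xP that by (auto simp: polyP_def)
    then show ?thesis
      using eq[of "Y t c'" "Y t c"] by simp
  qed
  moreover have "real \<Delta>b \<le> z (Y t c') - z (Y t c)"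
    if "t \<in> {1..l}" "(c, c') \<in> NA \<pi>s Ms tm chr t" for t c c'
  proof -
    have "real \<Delta>b \<le> x (Y t c') - x (Y t c)"
      using xP that by (auto simp: polyP_def)
    then show ?thesis
      using lower[OF Ints_of_nat] by blast
  qed
  moreover have "0 \<le> z (Y t c)" if "t \<in> {1..l}" "c \<in> Ac Cs A t" for t c
    using xP that nonneg[of "Y t c"] by (auto simp: polyP_def)
  ultimately show ?thesis
    unfolding polyP_def using zY by (auto simp: tighten_def W_in_vars_iff)
qed

lemma tighten_add_diff:
  assumes "\<And>p q. \<bar>d p - d q\<bar> \<le> \<bar>x p - x q\<bar>"
  shows "tighten Cs A l (\<lambda>v. x v + d v) v + tighten Cs A l (\<lambda>v. x v - d v) v = 2 * tighten Cs A l x v"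
proof (cases v)
  case (W t c)
  let ?p = "Y t c" and ?q = "Y (Suc t) c"
  have "\<bar>x ?p - x ?q\<bar> = (\<bar>(x ?p - x ?q) + (d ?p - d ?q)\<bar> + \<bar>(x ?p - x ?q) - (d ?p - d ?q)\<bar>) / 2"
    by (rule abs_eq_midpoint_abs[OF assms])
  then show ?thesis
    using W by (simp add: tighten_def algebra_simps)
qed (simp add: tighten_def)

lemma extreme_pt_polyP_W_tight:
  assumes ext: "extreme_pt x (polyP Cs l Ms tm chr A \<pi>s \<Delta> \<Delta>b)"
    and W: "W t c \<in> vars Cs A l"
  shows "x (W t c) = \<bar>x (Y t c) - x (Y (Suc t) c)\<bar>"
proof -
  let ?P = "polyP Cs l Ms tm chr A \<pi>s \<Delta> \<Delta>b"
  have xP: "x \<in> ?P"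
    using ext by (simp add: extreme_pt_def)
  define slack where "slack = x (W t c) - \<bar>x (Y t c) - x (Y (Suc t) c)\<bar>"
  have "0 \<le> slack"
    using xP W unfolding slack_def polyP_def W_in_vars_iff by (auto simp: abs_le_iff)
  define d where "d v = (if v = W t c then slack else 0)" for v
  have "(\<lambda>v. x v + d v) \<in> ?P" and "(\<lambda>v. x v - d v) \<in> ?P"
    using xP W \<open>0 \<le> slack\<close> unfolding polyP_def d_def slack_def by auto
  then have "d = (\<lambda>_. 0)"
    by (rule extreme_pt_symmetric_move[OF ext])
  then have "d (W t c) = 0"
    by simp
  then show ?thesis
    by (simp add: d_def slack_def)
qed

lemma extreme_pt_polyP_tighten:
  assumes ext: "extreme_pt x (polyP Cs l Ms tm chr A \<pi>s \<Delta> \<Delta>b)"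
  shows "tighten Cs A l x = x"
proof
  fix v
  have xP: "x \<in> polyP Cs l Ms tm chr A \<pi>s \<Delta> \<Delta>b"
    using ext by (simp add: extreme_pt_def)
  show "tighten Cs A l x v = x v"
    using polyP_outside_vars[OF xP] extreme_pt_polyP_W_tight[OF ext]
    by (cases v) (simp_all add: tighten_def)
qed

lemma extreme_pt_polyP_Y_Ints:
  assumes "finite Cs" and ext: "extreme_pt x (polyP Cs l Ms tm chr A \<pi>s \<Delta> \<Delta>b)"
  shows "x (Y t c) \<in> \<int>"
proof (rule ccontr)
  let ?P = "polyP Cs l Ms tm chr A \<pi>s \<Delta> \<Delta>b" and ?tighten = "tighten Cs A l"
  assume non_Int: "x (Y t c) \<notin> \<int>"
  have xP: "x \<in> ?P"
    using ext by (simp add: extreme_pt_def)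
  have "range x \<subseteq> insert 0 (x ` vars Cs A l)"
    using polyP_outside_vars[OF xP] by auto
  then have "finite (range x)"
    using finite_vars[OF assms(1)] by (meson finite_imageI finite_insert finite_subset)
  then obtain d where d_Y: "d (Y t c) \<noteq> 0"
    and d_small: "\<And>p q. \<bar>d p - d q\<bar> \<le> \<bar>x p - x q\<bar>"
    and d_Ints: "\<And>v. x v \<in> \<int> \<Longrightarrow> d v = 0"
    and d_eq: "\<And>p q. x p - x q \<in> \<int> \<Longrightarrow> d p = d q"
    and d_lower: "\<And>p q n s. n \<in> \<int> \<Longrightarrow> n \<le> x p - x q \<Longrightarrow> \<bar>s\<bar> \<le> 1 \<Longrightarrow>
      n \<le> (x p + s * d p) - (x q + s * d q)"
    and d_nonneg: "\<And>p n s. n \<in> \<int> \<Longrightarrow> n \<le> x p \<Longrightarrow> \<bar>s\<bar> \<le> 1 \<Longrightarrow> n \<le> x p + s * d p"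
    using non_Ints_perturbation[OF \<open>finite (range x)\<close> non_Int] by blast
  have d_outside: "d v = 0" if "v \<notin> vars Cs A l" for v
    using d_Ints polyP_outside_vars[OF xP that] by simp
  have moved_in_P: "?tighten (\<lambda>v. x v + s * d v) \<in> ?P" if "\<bar>s\<bar> \<le> 1" for s :: real
  proof (rule tighten_in_polyP[OF xP])
    show "x v + s * d v = 0" if "v \<notin> vars Cs A l" for v
      using polyP_outside_vars[OF xP that] d_outside[OF that] by simp
    show "x p + s * d p - (x q + s * d q) = x p - x q" if "x p - x q \<in> \<int>" for p q
      using d_eq[OF that] by simp
  qed (use d_lower d_nonneg[of 0] \<open>\<bar>s\<bar> \<le> 1\<close> in auto)
  define e where "e v = ?tighten (\<lambda>v. x v + d v) v - x v" for v
  have "(\<lambda>v. x v + e v) = ?tighten (\<lambda>v. x v + d v)"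
    by (simp add: e_def)
  then have plus: "(\<lambda>v. x v + e v) \<in> ?P"
    using moved_in_P[of 1] by simp
  have "(\<lambda>v. x v - e v) = ?tighten (\<lambda>v. x v - d v)"
    using tighten_add_diff[where d = d and x = x, OF d_small] extreme_pt_polyP_tighten[OF ext]
    by (fastforce simp: e_def algebra_simps)
  then have minus: "(\<lambda>v. x v - e v) \<in> ?P"
    using moved_in_P[of "-1"] by simp
  have "e = (\<lambda>_. 0)"
    using extreme_pt_symmetric_move[OF ext plus minus] .
  moreover have "e (Y t c) = d (Y t c)"
    using tighten_Y[of Cs A l "\<lambda>v. x v + d v"] polyP_outside_vars[OF xP] d_outside
    by (simp add: e_def)
  ultimately show False
    using d_Y by simp
qed

theorem proposition1:
  fixes Cs :: "'c set" and l :: nat and Ms :: "'m set" and tm :: "'m \<Rightarrow> nat"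
    and chr :: "'m \<Rightarrow> 'c set" and A :: "'c \<Rightarrow> nat set" and \<pi>s :: "nat \<Rightarrow> 'c list"
    and \<Delta> \<Delta>b :: nat and x :: "'c var \<Rightarrow> real"
  assumes "ordered_storyline Cs l Ms tm chr A \<pi>s"
    and "extreme_pt x (polyP Cs l Ms tm chr A \<pi>s \<Delta> \<Delta>b)"
  shows "\<forall>v. x v \<in> \<int>"
proof
  fix v
  have "finite Cs"
    using assms(1) by (simp add: ordered_storyline_def)
  then have Y_Ints: "x (Y t c) \<in> \<int>" for t c
    using extreme_pt_polyP_Y_Ints[OF _ assms(2)] by blast
  have "tighten Cs A l x v \<in> \<int>"
    using Y_Ints by (cases v) (simp_all add: tighten_def Ints_abs)
  then show "x v \<in> \<int>"
    using extreme_pt_polyP_tighten[OF assms(2)] by simp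
qed

end
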